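(* Let $D_n$ denote the diameter of $\mathcal{T}_n$. Then $D_0=0$ and, for every $n\ge 1$, $$D_n=\begin{cases}2D_{n-1}+1 & \text{if } n \text{ is odd},\\ 2D_{n-1} & \text{if } n \text{ is even}.\end{cases}$$
   Context: For $n\in\mathbb{N}$ let $G_n=\mathbb{Z}_{2^n}\times\mathbb{Z}_{2^n}$ (additive group), so $|G_n|=N=4^n$. Let $S^+=\{(-1,-1),(1,0),(0,1)\}$ and $S=S^+\cup(-S^+)=\{\pm(1,0),\pm(0,1),\pm(1,1)\}$. The undirected graph $\mathcal{T}_n$ (the undirected "arrowhead", equivalently the undirected "diamond") is the Cayley graph $\Gamma(G_n,S)$: its vertex set is $G_n$ and each vertex $u$ is adjacent to $u+s$ for every $s\in S$ (arithmetic modulo $2^n$ in each coordinate). The diameter of a graph is the maximum, over all pairs of vertices, of the length of a shortest path between them. ($\mathcal{T}_0$ is a single vertex.) *)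

theory Defs
  imports Main
begin

text \<open>The group G_n = Z_(2^n) x Z_(2^n), represented by pairs of integer
  representatives in {0..<2^n}.\<close>

definition verts :: "nat \<Rightarrow> (int \<times> int) set" where
  "verts n = {0..<2^n} \<times> {0..<2^n}"

definition gens :: "(int \<times> int) set" where
  "gens = {(1,0), (-1,0), (0,1), (0,-1), (1,1), (-1,-1)}"

definition gadd :: "nat \<Rightarrow> int \<times> int \<Rightarrow> int \<times> int \<Rightarrow> int \<times> int" where
  "gadd n u s = ((fst u + fst s) mod 2^n, (snd u + snd s) mod 2^n)"

definition adj :: "nat \<Rightarrow> ((int \<times> int) \<times> (int \<times> int)) set" where
  "adj n = {(u, v). u \<in> verts n \<and> (\<exists>s\<in>gens. v = gadd n u s)}"

definition gdist :: "nat \<Rightarrow> int \<times> int \<Rightarrow> int \<times> int \<Rightarrow> nat" where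
  "gdist n u v = (LEAST k. (u, v) \<in> adj n ^^ k)"

definition diam :: "nat \<Rightarrow> nat" where
  "diam n = Max {gdist n u v | u v. u \<in> verts n \<and> v \<in> verts n}"

end

theory Submission
  imports Defs
begin

text \<open>Lifted to \<open>\<int>\<^sup>2\<close>, the steps of a walk in \<open>\<T>\<^sub>n\<close> are the six unit vectors of the
  triangular lattice, whose word metric is the hexagonal norm \<open>max |x| |y| |x - y|\<close>.
  Hence the distance from \<open>u\<close> to \<open>v\<close> is the least hexagonal norm of a lift of \<open>v - u\<close>.
  With \<open>m = 2^n\<close> and \<open>K = \<lfloor>2m/3\<rfloor>\<close>, every residue pair mod \<open>m\<close> has a lift of norm at
  most \<open>K\<close>, while every lift of \<open>(m - K, K)\<close> has norm at least \<open>K\<close>; so \<open>D\<^sub>n = \<lfloor>2^(n+1)/3\<rfloor>\<close>,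
  and the recursion follows from \<open>2^n mod 3\<close> alternating between 1 and 2.\<close>

definition hex_norm :: "int \<Rightarrow> int \<Rightarrow> int" where
  "hex_norm x y = max \<bar>x\<bar> (max \<bar>y\<bar> \<bar>x - y\<bar>)"

lemma hex_norm_nonneg: "0 \<le> hex_norm x y"
  by (simp add: hex_norm_def)

lemma hex_norm_le_iff:
  "hex_norm x y \<le> K \<longleftrightarrow> \<bar>x\<bar> \<le> K \<and> \<bar>y\<bar> \<le> K \<and> \<bar>x - y\<bar> \<le> K"
  by (simp add: hex_norm_def)

lemma le_hex_norm_iff:
  "K \<le> hex_norm x y \<longleftrightarrow> K \<le> \<bar>x\<bar> \<or> K \<le> \<bar>y\<bar> \<or> K \<le> \<bar>x - y\<bar>"
  by (auto simp: hex_norm_def)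

lemma hex_norm_add_gen_le:
  assumes "s \<in> gens"
  shows "hex_norm (x + fst s) (y + snd s) \<le> hex_norm x y + 1"
  using assms by (auto simp: gens_def hex_norm_def)

lemma hex_norm_decrease_by_gen:
  assumes "hex_norm x y = int (Suc k)"
  shows "\<exists>s\<in>gens. hex_norm (x - fst s) (y - snd s) = int k"
proof -
  consider "x > 0" "y > 0" | "x < 0" "y < 0" | "x > 0" "y \<le> 0" | "x < 0" "y \<ge> 0"
    | "x = 0" "y > 0" | "x = 0" "y < 0"
    using assms by (force simp: hex_norm_def)
  then show ?thesis
  proof cases
    case 1 show ?thesis by (rule bexI[of _ "(1, 1)"]) (use 1 assms in \<open>auto simp: hex_norm_def gens_def\<close>)
  next
    case 2 show ?thesis by (rule bexI[of _ "(-1, -1)"]) (use 2 assms in \<open>auto simp: hex_norm_def gens_def\<close>)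
  next
    case 3 show ?thesis by (rule bexI[of _ "(1, 0)"]) (use 3 assms in \<open>auto simp: hex_norm_def gens_def\<close>)
  next
    case 4 show ?thesis by (rule bexI[of _ "(-1, 0)"]) (use 4 assms in \<open>auto simp: hex_norm_def gens_def\<close>)
  next
    case 5 show ?thesis by (rule bexI[of _ "(0, 1)"]) (use 5 assms in \<open>auto simp: hex_norm_def gens_def\<close>)
  next
    case 6 show ?thesis by (rule bexI[of _ "(0, -1)"]) (use 6 assms in \<open>auto simp: hex_norm_def gens_def\<close>)
  qed
qed

lemma gadd_in_verts: "gadd n u s \<in> verts n"
  by (simp add: gadd_def verts_def)

lemma gadd_zero: "u \<in> verts n \<Longrightarrow> gadd n u (0, 0) = u"
  by (auto simp: gadd_def verts_def)

lemma gadd_gadd: "gadd n (gadd n u (a, b)) (c, d) = gadd n u (a + c, b + d)"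
  by (simp add: gadd_def mod_add_left_eq add.assoc)

lemma relpow_adj_gadd_hex_norm:
  assumes "u \<in> verts n"
  shows "hex_norm x y = int k \<Longrightarrow> (u, gadd n u (x, y)) \<in> adj n ^^ k"
proof (induction k arbitrary: x y)
  case 0
  then have "x = 0" "y = 0" by (auto simp: hex_norm_def)
  then show ?case using assms by (simp add: gadd_zero)
next
  case (Suc k)
  obtain s where s: "s \<in> gens" "hex_norm (x - fst s) (y - snd s) = int k"
    using hex_norm_decrease_by_gen[OF Suc.prems] by blast
  define w where "w = gadd n u (x - fst s, y - snd s)"
  have "(u, w) \<in> adj n ^^ k" using Suc.IH[OF s(2)] by (simp add: w_def)
  moreover have "gadd n w s = gadd n u (x, y)"
    using gadd_gadd[of n u "x - fst s" "y - snd s" "fst s" "snd s"] by (simp add: w_def)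
  then have "(w, gadd n u (x, y)) \<in> adj n"
    using s(1) gadd_in_verts[of n u] unfolding adj_def w_def by force
  ultimately show ?case by auto
qed

lemma hex_norm_lift_le_of_relpow_adj:
  "(u, v) \<in> adj n ^^ k \<Longrightarrow>
    \<exists>i j. hex_norm (fst v - fst u + i * 2^n) (snd v - snd u + j * 2^n) \<le> int k"
proof (induction k arbitrary: v)
  case 0
  then show ?case by (intro exI[of _ 0]) (simp add: hex_norm_def)
next
  case (Suc k)
  then obtain w where w: "(u, w) \<in> adj n ^^ k" "(w, v) \<in> adj n" by auto
  obtain i j where ij: "hex_norm (fst w - fst u + i * 2^n) (snd w - snd u + j * 2^n) \<le> int k"
    using Suc.IH[OF w(1)] by blast
  obtain s where s: "s \<in> gens" "v = gadd n w s" using w(2) unfolding adj_def by auto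
  define a where "a = (fst w + fst s) div 2^n"
  define b where "b = (snd w + snd s) div 2^n"
  have lift: "fst v - fst u + (i + a) * 2^n = (fst w - fst u + i * 2^n) + fst s"
    "snd v - snd u + (j + b) * 2^n = (snd w - snd u + j * 2^n) + snd s"
    using s(2) unfolding gadd_def a_def b_def by (simp_all add: minus_div_mult_eq_mod [symmetric] algebra_simps)
  have "hex_norm (fst v - fst u + (i + a) * 2^n) (snd v - snd u + (j + b) * 2^n) \<le> int (Suc k)"
    unfolding lift using hex_norm_add_gen_le[OF s(1), of "fst w - fst u + i * 2^n" "snd w - snd u + j * 2^n"] ij
    by simp
  then show ?case by blast
qed

lemma exists_lift_hex_norm_le:
  fixes m K a b :: int
  assumes "0 \<le> a" "a < m" "0 \<le> b" "b < m" "2 * m \<le> 3 * K + 2"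
  shows "\<exists>x y. (x = a \<or> x = a - m) \<and> (y = b \<or> y = b - m) \<and> hex_norm x y \<le> K"
proof -
  consider "a \<le> K" "b \<le> K" | "m - K \<le> a" "m - K \<le> b" | "m - K \<le> b - a" | "m - K \<le> a - b"
    using assms by linarith
  then show ?thesis
  proof cases
    case 1 then show ?thesis using assms by (intro exI[of _ a] exI[of _ b]) (simp add: hex_norm_le_iff)
  next
    case 2 then show ?thesis using assms by (intro exI[of _ "a - m"] exI[of _ "b - m"]) (simp add: hex_norm_le_iff)
  next
    case 3 then show ?thesis using assms by (intro exI[of _ a] exI[of _ "b - m"]) (simp add: hex_norm_le_iff)
  next
    case 4 then show ?thesis using assms by (intro exI[of _ "a - m"] exI[of _ b]) (simp add: hex_norm_le_iff)
  qed
qed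

lemma int_multiple_cases:
  fixes i m :: int
  assumes "0 \<le> m"
  obtains "i * m \<le> - 2 * m" | "i = - 1" | "i = 0" | "m \<le> i * m"
proof -
  consider "i \<le> - 2" | "i = - 1" | "i = 0" | "1 \<le> i" by linarith
  then show thesis
    using that mult_right_mono[OF _ assms, of i "- 2"] mult_right_mono[OF _ assms, of 1 i] by cases auto
qed

lemma hex_norm_lift_ge:
  fixes m K i j :: int
  assumes "0 \<le> K" "3 * K \<le> 2 * m"
  shows "K \<le> hex_norm (m - K + i * m) (K + j * m)"
proof -
  have "0 \<le> m" using assms by linarith
  have "K \<le> \<bar>m - K + i * m\<bar> \<or> i = 0"
    by (rule int_multiple_cases[OF \<open>0 \<le> m\<close>, of i]) (use assms in auto)
  moreover have "K \<le> \<bar>K + j * m\<bar> \<or> j = - 1"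
    by (rule int_multiple_cases[OF \<open>0 \<le> m\<close>, of j]) (use assms in auto)
  ultimately show ?thesis
    using assms by (auto simp: le_hex_norm_iff)
qed

lemma gdist_le: "(u, v) \<in> adj n ^^ k \<Longrightarrow> gdist n u v \<le> k"
  unfolding gdist_def by (rule Least_le)

lemma relpow_adj_gdist: "(u, v) \<in> adj n ^^ k \<Longrightarrow> (u, v) \<in> adj n ^^ gdist n u v"
  unfolding gdist_def by (rule LeastI)

lemma diam_eqI:
  assumes "\<And>u v. u \<in> verts n \<Longrightarrow> v \<in> verts n \<Longrightarrow> gdist n u v \<le> K"
    and "u \<in> verts n" "v \<in> verts n" "K \<le> gdist n u v"
  shows "diam n = K"
proof -
  let ?D = "{gdist n u v | u v. u \<in> verts n \<and> v \<in> verts n}"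
  have "?D \<subseteq> {..K}" using assms(1) by auto
  then have "finite ?D" by (rule finite_subset) simp
  moreover have "K \<in> ?D" using assms by (metis (mono_tags, lifting) le_antisym mem_Collect_eq)
  ultimately show ?thesis
    unfolding diam_def using assms(1) by (intro Max_eqI) auto
qed

lemma mod_add_eq_of_mod_diff_eq:
  fixes u v x m :: int
  assumes "x mod m = (v - u) mod m" "0 \<le> v" "v < m"
  shows "(u + x) mod m = v"
proof -
  have "(u + x) mod m = (u + (v - u) mod m) mod m" by (simp add: mod_add_right_eq flip: assms(1))
  also have "\<dots> = v" by (simp add: mod_add_right_eq assms(2,3))
  finally show ?thesis .
qed

lemma relpow_adj_within_two_thirds:
  assumes "u \<in> verts n" "v \<in> verts n"
  shows "\<exists>k \<le> 2 * 2^n div 3. (u, v) \<in> adj n ^^ k"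
proof -
  define m :: int where "m = 2^n"
  define a where "a = (fst v - fst u) mod m"
  define b where "b = (snd v - snd u) mod m"
  have "0 < m" by (simp add: m_def)
  then have ab: "0 \<le> a" "a < m" "0 \<le> b" "b < m" by (simp_all add: a_def b_def)
  have "2 * m \<le> 3 * (2 * m div 3) + 2" by linarith
  then obtain x y where x: "x = a \<or> x = a - m" and y: "y = b \<or> y = b - m"
      and xy: "hex_norm x y \<le> 2 * m div 3"
    using exists_lift_hex_norm_le[OF ab] by blast
  have "x mod m = (fst v - fst u) mod m" "y mod m = (snd v - snd u) mod m"
    using x y by (auto simp: a_def b_def mod_diff_left_eq)
  moreover have "0 \<le> fst v" "fst v < m" "0 \<le> snd v" "snd v < m"
    using assms(2) by (auto simp: verts_def m_def)
  ultimately have "gadd n u (x, y) = v"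
    unfolding gadd_def m_def[symmetric] by (simp add: mod_add_eq_of_mod_diff_eq)
  moreover have "hex_norm x y = int (nat (hex_norm x y))" by (simp add: hex_norm_nonneg)
  ultimately have "(u, v) \<in> adj n ^^ nat (hex_norm x y)"
    using relpow_adj_gadd_hex_norm[OF assms(1)] by metis
  moreover have "nat (hex_norm x y) \<le> 2 * 2^n div 3"
    using xy by (simp add: m_def nat_le_iff zdiv_int)
  ultimately show ?thesis by blast
qed

lemma gdist_le_two_thirds:
  "u \<in> verts n \<Longrightarrow> v \<in> verts n \<Longrightarrow> gdist n u v \<le> 2 * 2^n div 3"
  using relpow_adj_within_two_thirds gdist_le le_trans by metis

lemma diam_eq: "diam n = 2 * 2^n div 3"
proof -
  define m :: int where "m = 2^n"
  define K :: nat where "K = 2 * 2^n div 3"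
  have "int K = 2 * m div 3" by (simp add: K_def m_def zdiv_int)
  then have K: "3 * int K \<le> 2 * m" "2 * m < 3 * int K + 3" by linarith+
  have zero: "(0, 0) \<in> verts n" by (simp add: verts_def)
  show ?thesis
  proof (cases "K = 0")
    case True \<comment> \<open>only for \<open>n = 0\<close>, where \<open>(m - K, K)\<close> is not a vertex\<close>
    have "diam n = K"
      using diam_eqI[OF _ zero zero, of K] gdist_le_two_thirds True by (simp add: K_def)
    then show ?thesis by (simp add: K_def)
  next
    case False
    define w where "w = (m - int K, int K)"
    have w: "w \<in> verts n" using K False by (simp add: w_def verts_def flip: m_def)
    have "((0, 0), w) \<in> adj n ^^ gdist n (0, 0) w"
      using relpow_adj_within_two_thirds[OF zero w] relpow_adj_gdist by blast
    then obtain i j where "hex_norm (m - int K + i * m) (int K + j * m) \<le> int (gdist n (0, 0) w)"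
      using hex_norm_lift_le_of_relpow_adj unfolding w_def m_def by fastforce
    then have "K \<le> gdist n (0, 0) w"
      using hex_norm_lift_ge[of "int K" m i j] K by linarith
    then have "diam n = K"
      by (intro diam_eqI[OF _ zero w]) (auto simp: K_def gdist_le_two_thirds)
    then show ?thesis by (simp add: K_def)
  qed
qed

lemma two_mul_div_three:
  "2 * x div 3 = 2 * (x div 3) + (if x mod 3 = 2 then 1 else 0 :: nat)"
proof -
  have "2 * x div 3 = (2 * (x mod 3) + 3 * (2 * (x div 3))) div 3"
    by (metis mult.left_commute mod_mult_div_eq add_mult_distrib2)
  also have "\<dots> = 2 * (x mod 3) div 3 + 2 * (x div 3)" by simp
  also have "2 * (x mod 3) div 3 = (if x mod 3 = 2 then 1 else 0)"
    using mod_less_divisor[of 3 x] by (cases "x mod 3") (auto simp: less_Suc_eq)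
  finally show ?thesis by simp
qed

lemma two_pow_mod_three: "(2::nat) ^ n mod 3 = (if even n then 1 else 2)"
proof (induction n)
  case (Suc n)
  have "(2::nat) ^ Suc n mod 3 = 2 * (2 ^ n mod 3) mod 3" by (simp add: mod_mult_right_eq)
  then show ?case using Suc by auto
qed simp

lemma diam_Suc: "diam (Suc p) = (if odd (Suc p) then 2 * diam p + 1 else 2 * diam p)"
proof -
  have "diam (Suc p) = 2 * (2 * 2 ^ p) div 3" by (simp only: diam_eq power_Suc)
  also have "\<dots> = 2 * diam p + (if 2 * 2 ^ p mod 3 = (2::nat) then 1 else 0)"
    unfolding diam_eq[of p] by (rule two_mul_div_three)
  also have "2 * 2 ^ p mod 3 = (2::nat) \<longleftrightarrow> odd (Suc p)"
    using two_pow_mod_three[of "Suc p"] by simp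
  finally show ?thesis by simp
qed

theorem lemma1:
  shows "diam 0 = 0 \<and>
    (\<forall>n::nat. n \<ge> 1 \<longrightarrow>
      diam n = (if odd n then 2 * diam (n - 1) + 1 else 2 * diam (n - 1)))"
proof (intro conjI allI impI)
  show "diam 0 = 0" unfolding diam_eq by simp
  fix n :: nat
  assume "n \<ge> 1"
  then obtain p where "n = Suc p" by (cases n) auto
  then show "diam n = (if odd n then 2 * diam (n - 1) + 1 else 2 * diam (n - 1))"
    by (simp only: diam_Suc diff_Suc_1)
qed

end
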